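(* For every $p\in\mathbb{H}_1[X]$, the degree $\deg(p)$ is integral (or $-\infty$ for $p=0$). Furthermore, for all $p,q\in\mathbb{H}_1[X]$, $\deg(p\cdot q)=\deg(p)+\deg(q)$.
   Context: $\mathbb{H}$ is the skew-field of real quaternions (basis $1,i,j,k$, $i^2=j^2=k^2=ijk=-1$, $ij=-ji=k$ and cyclic permutations); for $a=a_0+ia_1+ja_2+ka_3$ write $\Re(a)=a_0$, $\Im_i(a)=a_1$, $\Im_j(a)=a_2$, $\Im_k(a)=a_3$. The set $\mathbb{H}^{\mathbb{H}}$ of all maps $\mathbb{H}\to\mathbb{H}$ is a ring under pointwise addition and multiplication; identify $a\in\mathbb{H}$ with the constant map $x\mapsto a$ and let $X$ be the identity map. $\mathbb{H}_1[X]$ is the smallest subring of $\mathbb{H}^{\mathbb{H}}$ containing $X$ and all constant maps (e.g. $a_1+X a_2 X X a_3 + a_4 XXX a_5$). For $f\in\mathbb{H}_1[X]$ define real four-variate functions $\tilde f_0,\ldots,\tilde f_3$ by $\tilde f_0(X_0,\ldots,X_3)=\Re(f(X_0+iX_1+jX_2+kX_3))$, $\tilde f_1=\Im_i(f(\cdot))$, $\tilde f_2=\Im_j(f(\cdot))$, $\tilde f_3=\Im_k(f(\cdot))$; these are real polynomials in $X_0,\ldots,X_3$. The degree of $f\in\mathbb{H}_1[X]$ is defined as $\deg(f):=\tfrac12\deg(\tilde f_0^2+\tilde f_1^2+\tilde f_2^2+\tilde f_3^2)$, where on the right $\deg$ is total degree of a real four-variate polynomial (with $\deg(0)=-\infty$).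 *)

theory Defs
  imports Complex_Main "HOL-Library.Extended_Real"
begin

datatype quat = Quat (Re_q: real) (Im_i: real) (Im_j: real) (Im_k: real)

definition qadd :: "quat \<Rightarrow> quat \<Rightarrow> quat" where
  "qadd a b = Quat (Re_q a + Re_q b) (Im_i a + Im_i b) (Im_j a + Im_j b) (Im_k a + Im_k b)"

definition qneg :: "quat \<Rightarrow> quat" where
  "qneg a = Quat (- Re_q a) (- Im_i a) (- Im_j a) (- Im_k a)"

text \<open>Hamilton product (i^2 = j^2 = k^2 = ijk = -1, ij = k, jk = i, ki = j).\<close>
definition qmul :: "quat \<Rightarrow> quat \<Rightarrow> quat" where
  "qmul a b = Quat
     (Re_q a * Re_q b - Im_i a * Im_i b - Im_j a * Im_j b - Im_k a * Im_k b)
     (Re_q a * Im_i b + Im_i a * Re_q b + Im_j a * Im_k b - Im_k a * Im_j b)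
     (Re_q a * Im_j b - Im_i a * Im_k b + Im_j a * Re_q b + Im_k a * Im_i b)
     (Re_q a * Im_k b + Im_i a * Im_j b - Im_j a * Im_i b + Im_k a * Re_q b)"

definition qzero :: quat where "qzero = Quat 0 0 0 0"

inductive_set H1X :: "(quat \<Rightarrow> quat) set" where
  const: "(\<lambda>x. c) \<in> H1X"
| ident: "(\<lambda>x. x) \<in> H1X"
| add: "f \<in> H1X \<Longrightarrow> g \<in> H1X \<Longrightarrow> (\<lambda>x. qadd (f x) (g x)) \<in> H1X"
| neg: "f \<in> H1X \<Longrightarrow> (\<lambda>x. qneg (f x)) \<in> H1X"
| mul: "f \<in> H1X \<Longrightarrow> g \<in> H1X \<Longrightarrow> (\<lambda>x. qmul (f x) (g x)) \<in> H1X"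

definition poly4_le :: "nat \<Rightarrow> (real \<Rightarrow> real \<Rightarrow> real \<Rightarrow> real \<Rightarrow> real) \<Rightarrow> bool" where
  "poly4_le d g \<longleftrightarrow> (\<exists>cf :: nat \<times> nat \<times> nat \<times> nat \<Rightarrow> real.
     (\<forall>a b c e. cf (a, b, c, e) \<noteq> 0 \<longrightarrow> a + b + c + e \<le> d) \<and>
     (\<forall>x0 x1 x2 x3. g x0 x1 x2 x3 =
        (\<Sum>a\<le>d. \<Sum>b\<le>d. \<Sum>c\<le>d. \<Sum>e\<le>d.
           cf (a, b, c, e) * x0 ^ a * x1 ^ b * x2 ^ c * x3 ^ e)))"

text \<open>Total degree of a real four-variate polynomial (function), with deg 0 = -infinity.
  (Real polynomial functions determine their coefficients, so this is the usual
  total degree.)\<close>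
definition tdeg4 :: "(real \<Rightarrow> real \<Rightarrow> real \<Rightarrow> real \<Rightarrow> real) \<Rightarrow> ereal" where
  "tdeg4 g = (if g = (\<lambda>_ _ _ _. 0) then -\<infinity> else ereal (real (LEAST d. poly4_le d g)))"

definition qdeg :: "(quat \<Rightarrow> quat) \<Rightarrow> ereal" where
  "qdeg f = tdeg4 (\<lambda>x0 x1 x2 x3.
      let y = f (Quat x0 x1 x2 x3) in
        (Re_q y)\<^sup>2 + (Im_i y)\<^sup>2 + (Im_j y)\<^sup>2 + (Im_k y)\<^sup>2) / 2"

end

(*
  Along a ray, a real polynomial function f of degree D becomes a univariate polynomial
  t \<mapsto> f (t v) of degree at most D whose t^D-coefficient is H v, where H, the homogeneous
  part of degree D of f, is a nonzero polynomial function.  Restricting to a line shows that a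
  product of nonzero polynomial functions is nonzero, so there is a v at which the leading
  forms of f and g both do not vanish; on the ray through v the degrees add, whence
  deg (f g) = deg f + deg g.  If D is odd then H (- v) = - H v, so f is negative far out on
  some ray: a nonnegative polynomial function has even degree.

  The components of p in H_1[X] are real polynomials, so |p|^2 is a nonnegative polynomial
  function, multiplicative by Euler's four-square identity.  Hence deg p = deg |p|^2 / 2 is an
  integer, and it is additive.
*)
theory Submission
  imports Defs "HOL-Computational_Algebra.Polynomial" "HOL-Analysis.Product_Vector"
begin

section \<open>Polynomial functions on real vector spaces\<close>

inductive polyfun :: "nat \<Rightarrow> ('a::real_vector \<Rightarrow> real) \<Rightarrow> bool" where
  const: "polyfun d (\<lambda>_. c)"
| linear: "linear l \<Longrightarrow> polyfun (Suc d) l"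
| add: "polyfun d f \<Longrightarrow> polyfun d g \<Longrightarrow> polyfun d (\<lambda>x. f x + g x)"
| mult: "polyfun d f \<Longrightarrow> polyfun e g \<Longrightarrow> polyfun (d + e) (\<lambda>x. f x * g x)"

lemma polyfun_mono: "polyfun d f \<Longrightarrow> d \<le> d' \<Longrightarrow> polyfun d' f"
proof (induction arbitrary: d' rule: polyfun.induct)
  case (linear l d)
  then obtain d'' where "d' = Suc d''" by (metis Suc_le_D)
  then show ?case using linear by (simp add: polyfun.linear)
next
  case (mult d f e g)
  then have "polyfun (d + (d' - d)) (\<lambda>x. f x * g x)"
    by (intro polyfun.mult) auto
  then show ?case using mult.prems by simp
qed (auto intro: polyfun.intros)

lemma polyfun_uminus: "polyfun d f \<Longrightarrow> polyfun d (\<lambda>x. - f x)"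
  using polyfun.mult[OF polyfun.const[of 0 "-1"]] by simp

lemma polyfun_diff: "polyfun d f \<Longrightarrow> polyfun d g \<Longrightarrow> polyfun d (\<lambda>x. f x - g x)"
  using polyfun.add[OF _ polyfun_uminus] by simp

lemma polyfun_power: "polyfun d f \<Longrightarrow> polyfun (n * d) (\<lambda>x. f x ^ n)"
  by (induction n) (auto intro: polyfun.const polyfun.mult)

lemma polyfun_on_line:
  assumes "polyfun d f"
  shows "\<exists>P. degree P \<le> d \<and> (\<forall>t. f (u + t *\<^sub>R v) = poly P t)"
  using assms
proof (induction rule: polyfun.induct)
  case (const d c)
  show ?case by (intro exI[of _ "[:c:]"]) simp
next
  case (linear l d)
  then have "l (u + t *\<^sub>R v) = poly [:l u, l v:] t" for t
    by (simp add: linear_add linear_scale)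
  then show ?case by (intro exI[of _ "[:l u, l v:]"]) simp
next
  case (add d f g)
  then obtain P Q where "degree P \<le> d" "degree Q \<le> d"
    "\<forall>t. f (u + t *\<^sub>R v) = poly P t" "\<forall>t. g (u + t *\<^sub>R v) = poly Q t" by blast
  then show ?case by (intro exI[of _ "P + Q"]) (simp add: degree_add_le)
next
  case (mult d f e g)
  then obtain P Q where "degree P \<le> d" "degree Q \<le> e"
    "\<forall>t. f (u + t *\<^sub>R v) = poly P t" "\<forall>t. g (u + t *\<^sub>R v) = poly Q t" by blast
  then show ?case
    by (intro exI[of _ "P * Q"]) (auto intro: order.trans[OF degree_mult_le])
qed

definition polyfun_degree :: "('a::real_vector \<Rightarrow> real) \<Rightarrow> nat" where
  "polyfun_degree f = (LEAST d. polyfun d f)"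

lemma polyfun_polyfun_degree: "polyfun d f \<Longrightarrow> polyfun (polyfun_degree f) f"
  unfolding polyfun_degree_def by (rule LeastI)

lemma polyfun_degree_le: "polyfun d f \<Longrightarrow> polyfun_degree f \<le> d"
  unfolding polyfun_degree_def by (rule Least_le)

lemma degree_le_polyfun_degree:
  assumes "polyfun d f" "\<forall>t. f (u + t *\<^sub>R v) = poly P t"
  shows "degree P \<le> polyfun_degree f"
proof -
  obtain Q where "degree Q \<le> polyfun_degree f" "\<forall>t. f (u + t *\<^sub>R v) = poly Q t"
    using polyfun_on_line[OF polyfun_polyfun_degree[OF assms(1)]] by blast
  moreover from this assms(2) have "Q = P"
    by (auto simp: fun_eq_iff simp flip: poly_eq_poly_eq_iff)
  ultimately show ?thesis by simp
qed

lemma polyfun_lower_part_mult: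
  assumes H: "polyfun d H" "polyfun (d - 1) (\<lambda>x. f x - H x)" "d = 0 \<longrightarrow> H = f"
    and K: "polyfun e g" "polyfun (e - 1) (\<lambda>x. g x - K x)" "e = 0 \<longrightarrow> K = g"
  shows "polyfun (d + e - 1) (\<lambda>x. f x * g x - H x * K x)"
proof -
  have split: "f x * g x - H x * K x = (f x - H x) * g x + H x * (g x - K x)" for x
    by (simp add: algebra_simps)
  show ?thesis
  proof (cases "d = 0 \<or> e = 0")
    case True
    then show ?thesis
      using polyfun.mult[OF H(1) K(2)] polyfun.mult[OF H(2) K(1)] H(3) K(3)
      by (auto simp: split)
  next
    case False
    then have deg: "d - 1 + e = d + e - 1" "d + (e - 1) = d + e - 1" by auto
    have "polyfun (d + e - 1) (\<lambda>x. (f x - H x) * g x)"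
      "polyfun (d + e - 1) (\<lambda>x. H x * (g x - K x))"
      using polyfun.mult[OF H(2) K(1)] polyfun.mult[OF H(1) K(2)] by (simp_all only: deg)
    then show ?thesis by (simp only: split) (rule polyfun.add)
  qed
qed

(* At d = 0 the truncated d - 1 is again 0, so the last conjunct is what pins down H = f. *)
lemma polyfun_homogeneous_split:
  assumes "polyfun d f"
  shows "\<exists>H. polyfun d H \<and> (\<forall>t x. H (t *\<^sub>R x) = t ^ d * H x) \<and>
    polyfun (d - 1) (\<lambda>x. f x - H x) \<and> (d = 0 \<longrightarrow> H = f)"
  using assms
proof (induction rule: polyfun.induct)
  case (const d c)
  show ?case
    by (intro exI[of _ "if d = 0 then (\<lambda>_. c) else (\<lambda>_. 0)"]) (auto intro: polyfun.const)
next
  case (linear l d)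
  show ?case
  proof (cases d)
    case 0
    with linear show ?thesis
      by (intro exI[of _ l]) (auto simp: linear_scale intro: polyfun.intros)
  next
    case (Suc d')
    with linear show ?thesis
      by (intro exI[of _ "\<lambda>_. 0"]) (auto intro: polyfun.intros)
  qed
next
  case (add d f g)
  then obtain H K where "polyfun d H" "\<forall>t x. H (t *\<^sub>R x) = t ^ d * H x"
      "polyfun (d - 1) (\<lambda>x. f x - H x)" "d = 0 \<longrightarrow> H = f"
    and "polyfun d K" "\<forall>t x. K (t *\<^sub>R x) = t ^ d * K x"
      "polyfun (d - 1) (\<lambda>x. g x - K x)" "d = 0 \<longrightarrow> K = g"
    by blast
  then show ?case
    by (intro exI[of _ "\<lambda>x. H x + K x"])
      (auto simp: algebra_simps dest: polyfun.add)
next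
  case (mult d f e g)
  then obtain H K where H: "polyfun d H" "\<forall>t x. H (t *\<^sub>R x) = t ^ d * H x"
      "polyfun (d - 1) (\<lambda>x. f x - H x)" "d = 0 \<longrightarrow> H = f"
    and K: "polyfun e K" "\<forall>t x. K (t *\<^sub>R x) = t ^ e * K x"
      "polyfun (e - 1) (\<lambda>x. g x - K x)" "e = 0 \<longrightarrow> K = g"
    by blast
  then show ?case
    using polyfun_lower_part_mult[OF H(1,3,4) mult.hyps(2) K(3,4)]
    by (intro exI[of _ "\<lambda>x. H x * K x"]) (auto simp: power_add intro: polyfun.mult)
qed

lemma polyfun_leading_form:
  assumes "polyfun d f" "f \<noteq> (\<lambda>_. 0)"
  defines "D \<equiv> polyfun_degree f"
  shows "\<exists>H. H \<noteq> (\<lambda>_. 0) \<and> polyfun D H \<and> (\<forall>t x. H (t *\<^sub>R x) = t ^ D * H x) \<and>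
    (\<forall>v. \<exists>P. degree P \<le> D \<and> coeff P D = H v \<and> (\<forall>t. f (t *\<^sub>R v) = poly P t))"
proof -
  obtain H where H: "polyfun D H" "\<forall>t x. H (t *\<^sub>R x) = t ^ D * H x"
    and L: "polyfun (D - 1) (\<lambda>x. f x - H x)" and H0: "D = 0 \<longrightarrow> H = f"
    using polyfun_homogeneous_split[OF polyfun_polyfun_degree[OF assms(1)]] unfolding D_def by metis
  have "H \<noteq> (\<lambda>_. 0)"
  proof
    assume "H = (\<lambda>_. 0)"
    with L have "D \<le> D - 1" using polyfun_degree_le D_def by fastforce
    with H0 \<open>H = (\<lambda>_. 0)\<close> assms(2) show False by auto
  qed
  moreover have "\<exists>P. degree P \<le> D \<and> coeff P D = H v \<and> (\<forall>t. f (t *\<^sub>R v) = poly P t)" for v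
  proof -
    obtain Q where Q: "degree Q \<le> D - 1" "\<forall>t. f (0 + t *\<^sub>R v) - H (0 + t *\<^sub>R v) = poly Q t"
      using polyfun_on_line[OF L] by blast
    have "coeff Q D = 0"
    proof (cases "D = 0")
      case True
      with H0 Q(2) have "Q = 0" by (auto simp flip: poly_all_0_iff_0)
      then show ?thesis by simp
    next
      case False
      with Q(1) show ?thesis by (intro coeff_eq_0) simp
    qed
    moreover have "degree (monom (H v) D + Q) \<le> D"
      using Q(1) degree_monom_le[of "H v" D] by (intro degree_add_le) auto
    moreover have "f (t *\<^sub>R v) = poly (monom (H v) D + Q) t" for t
      using Q(2)[rule_format, of t] H(2) by (simp add: poly_monom algebra_simps)
    ultimately show ?thesis by (intro exI[of _ "monom (H v) D + Q"]) simp
  qed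
  ultimately show ?thesis using H by blast
qed

lemma polyfun_mult_nonzero:
  assumes "polyfun d f" "polyfun e g" "f \<noteq> (\<lambda>_. 0)" "g \<noteq> (\<lambda>_. 0)"
  shows "(\<lambda>x. f x * g x) \<noteq> (\<lambda>_. 0)"
proof -
  obtain u w where "f u \<noteq> 0" "g w \<noteq> 0" using assms(3,4) by fastforce
  obtain A B where A: "\<forall>s. f (u + s *\<^sub>R (w - u)) = poly A s"
    and B: "\<forall>s. g (u + s *\<^sub>R (w - u)) = poly B s"
    using polyfun_on_line[OF assms(1)] polyfun_on_line[OF assms(2)] by metis
  have "poly A 0 \<noteq> 0" "poly B 1 \<noteq> 0"
    using A[rule_format, of 0] B[rule_format, of 1] \<open>f u \<noteq> 0\<close> \<open>g w \<noteq> 0\<close> by simp_all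
  then have "A * B \<noteq> 0" by auto
  then obtain s where "poly (A * B) s \<noteq> 0" using poly_all_0_iff_0 by blast
  with A B have "f (u + s *\<^sub>R (w - u)) * g (u + s *\<^sub>R (w - u)) \<noteq> 0" by simp
  then show ?thesis by (auto dest: fun_cong)
qed

lemma polyfun_degree_mult:
  assumes "polyfun d f" "polyfun e g" "f \<noteq> (\<lambda>_. 0)" "g \<noteq> (\<lambda>_. 0)"
  shows "polyfun_degree (\<lambda>x. f x * g x) = polyfun_degree f + polyfun_degree g"
proof -
  define D E where "D = polyfun_degree f" and "E = polyfun_degree g"
  obtain F where F: "F \<noteq> (\<lambda>_. 0)" "polyfun D F"
    and ray_f: "\<forall>v. \<exists>P. degree P \<le> D \<and> coeff P D = F v \<and> (\<forall>t. f (t *\<^sub>R v) = poly P t)"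
    using polyfun_leading_form[OF assms(1,3)] unfolding D_def by blast
  obtain G where G: "G \<noteq> (\<lambda>_. 0)" "polyfun E G"
    and ray_g: "\<forall>v. \<exists>P. degree P \<le> E \<and> coeff P E = G v \<and> (\<forall>t. g (t *\<^sub>R v) = poly P t)"
    using polyfun_leading_form[OF assms(2,4)] unfolding E_def by blast
  obtain v where "F v * G v \<noteq> 0" using polyfun_mult_nonzero[OF F(2) G(2) F(1) G(1)] by fastforce
  obtain P Q where P: "degree P \<le> D" "coeff P D \<noteq> 0" "\<forall>t. f (t *\<^sub>R v) = poly P t"
    and Q: "degree Q \<le> E" "coeff Q E \<noteq> 0" "\<forall>t. g (t *\<^sub>R v) = poly Q t"
    using ray_f ray_g \<open>F v * G v \<noteq> 0\<close> by (metis mult_eq_0_iff)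
  have "degree P = D" using P(1) le_degree[OF P(2)] by linarith
  moreover have "degree Q = E" using Q(1) le_degree[OF Q(2)] by linarith
  moreover have "P \<noteq> 0" "Q \<noteq> 0" using P(2) Q(2) by auto
  ultimately have "degree (P * Q) = D + E" by (simp add: degree_mult_eq)
  moreover have "polyfun (D + E) (\<lambda>x. f x * g x)"
    unfolding D_def E_def
    using polyfun.mult[OF polyfun_polyfun_degree[OF assms(1)] polyfun_polyfun_degree[OF assms(2)]] .
  moreover have "\<forall>t. f (0 + t *\<^sub>R v) * g (0 + t *\<^sub>R v) = poly (P * Q) t"
    using P(3) Q(3) by simp
  ultimately show ?thesis
    using degree_le_polyfun_degree polyfun_degree_le unfolding D_def E_def
    by (metis (no_types, lifting) order.antisym)
qed

lemma ex_poly_neg_if_lead_coeff_neg: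
  fixes P :: "real poly"
  assumes "lead_coeff P < 0"
  shows "\<exists>t. poly P t < 0"
proof -
  obtain n where "\<forall>t\<ge>n. lead_coeff (- P) \<le> poly (- P) t"
    using poly_pinfty_gt_lc[of "- P"] assms by auto
  then have "poly P n \<le> lead_coeff P" by auto
  with assms show ?thesis by (intro exI[of _ n]) simp
qed

lemma even_polyfun_degree_nonneg:
  assumes "polyfun d f" "\<And>x. f x \<ge> 0"
  shows "even (polyfun_degree f)"
proof (rule ccontr)
  define D where "D = polyfun_degree f"
  assume "odd (polyfun_degree f)"
  then have "odd D" "D \<noteq> 0" unfolding D_def using odd_pos by auto
  have "f \<noteq> (\<lambda>_. 0)"
  proof
    assume "f = (\<lambda>_. 0)"
    then have "polyfun 0 f" by (simp add: polyfun.const)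
    with \<open>D \<noteq> 0\<close> show False using polyfun_degree_le D_def by fastforce
  qed
  then obtain H where H: "H \<noteq> (\<lambda>_. 0)" "\<forall>t x. H (t *\<^sub>R x) = t ^ D * H x"
    and ray: "\<forall>v. \<exists>P. degree P \<le> D \<and> coeff P D = H v \<and> (\<forall>t. f (t *\<^sub>R v) = poly P t)"
    using polyfun_leading_form[OF assms(1)] unfolding D_def by blast
  obtain v where "H v \<noteq> 0" using H(1) by fastforce
  moreover have "H (- v) = - H v"
    using H(2)[rule_format, of "-1" v] \<open>odd D\<close> by simp
  ultimately obtain w where "H w < 0" by (metis neg_less_0_iff_less linorder_neqE_linordered_idom)
  then obtain P where P: "degree P \<le> D" "coeff P D < 0" "\<forall>t. f (t *\<^sub>R w) = poly P t"
    using ray by metis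
  then have "lead_coeff P < 0" using le_degree[of P D] by (simp add: order.antisym)
  then obtain t where "poly P t < 0" using ex_poly_neg_if_lead_coeff_neg by blast
  with P(3) assms(2) show False by (metis not_le)
qed

section \<open>Polynomials in four real variables\<close>

lemma poly4_le_zero: "poly4_le d (\<lambda>_ _ _ _. 0)"
  unfolding poly4_le_def by (intro exI[of _ "\<lambda>_. 0"]) simp

lemma sum_box4:
  "(\<Sum>a\<le>d. \<Sum>b\<le>d. \<Sum>c\<le>d. \<Sum>e\<le>d. G a b c e) =
   (\<Sum>(a, b, c, e)\<in>{..d::nat} \<times> {..d} \<times> {..d} \<times> {..d}. (G a b c e :: real))"
  by (simp add: sum.cartesian_product)

lemma poly4_le_monomial:
  assumes "a + b + c + e \<le> d"
  shows "poly4_le d (\<lambda>x0 x1 x2 x3. k * x0 ^ a * x1 ^ b * x2 ^ c * x3 ^ e)"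
  unfolding poly4_le_def
proof (intro exI[of _ "\<lambda>m. if m = (a, b, c, e) then k else 0"] conjI allI impI)
  fix x0 x1 x2 x3 :: real
  let ?B = "{..d} \<times> {..d} \<times> {..d} \<times> {..d}"
  have "(\<Sum>(a', b', c', e')\<in>?B.
       (if (a', b', c', e') = (a, b, c, e) then k else 0) * x0 ^ a' * x1 ^ b' * x2 ^ c' * x3 ^ e') =
     (\<Sum>m\<in>?B. if m = (a, b, c, e) then k * x0 ^ a * x1 ^ b * x2 ^ c * x3 ^ e else 0)"
    by (rule sum.cong) (auto split: if_splits simp del: mult_eq_0_iff)
  also have "\<dots> = k * x0 ^ a * x1 ^ b * x2 ^ c * x3 ^ e"
    using assms by (simp add: sum.delta')
  finally show "k * x0 ^ a * x1 ^ b * x2 ^ c * x3 ^ e =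
    (\<Sum>a'\<le>d. \<Sum>b'\<le>d. \<Sum>c'\<le>d. \<Sum>e'\<le>d.
       (if (a', b', c', e') = (a, b, c, e) then k else 0) * x0 ^ a' * x1 ^ b' * x2 ^ c' * x3 ^ e')"
    by (simp only: sum_box4)
qed (use assms in \<open>auto split: if_splits\<close>)

lemma poly4_le_add:
  assumes "poly4_le d f" "poly4_le d g"
  shows "poly4_le d (\<lambda>x0 x1 x2 x3. f x0 x1 x2 x3 + g x0 x1 x2 x3)"
proof -
  obtain cf cg where
    "\<forall>a b c e. cf (a, b, c, e) \<noteq> 0 \<longrightarrow> a + b + c + e \<le> d"
    "\<forall>x0 x1 x2 x3. f x0 x1 x2 x3 = (\<Sum>a\<le>d. \<Sum>b\<le>d. \<Sum>c\<le>d. \<Sum>e\<le>d.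
       cf (a, b, c, e) * x0 ^ a * x1 ^ b * x2 ^ c * x3 ^ e)"
    "\<forall>a b c e. cg (a, b, c, e) \<noteq> 0 \<longrightarrow> a + b + c + e \<le> d"
    "\<forall>x0 x1 x2 x3. g x0 x1 x2 x3 = (\<Sum>a\<le>d. \<Sum>b\<le>d. \<Sum>c\<le>d. \<Sum>e\<le>d.
       cg (a, b, c, e) * x0 ^ a * x1 ^ b * x2 ^ c * x3 ^ e)"
    using assms unfolding poly4_le_def by blast
  then show ?thesis
    unfolding poly4_le_def
    by (intro exI[of _ "\<lambda>m. cf m + cg m"] conjI allI impI)
      (metis add.right_neutral, simp add: sum.distrib distrib_right)
qed

lemma poly4_le_induct [consumes 1, case_names zero monomial add]:
  assumes "poly4_le d g"
    and zero: "P (\<lambda>_ _ _ _. 0)"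
    and monomial: "\<And>k a b c e. a + b + c + e \<le> d \<Longrightarrow>
      P (\<lambda>x0 x1 x2 x3. k * x0 ^ a * x1 ^ b * x2 ^ c * x3 ^ e)"
    and add: "\<And>f g. P f \<Longrightarrow> P g \<Longrightarrow> P (\<lambda>x0 x1 x2 x3. f x0 x1 x2 x3 + g x0 x1 x2 x3)"
  shows "P g"
proof -
  obtain cf where cf: "\<forall>a b c e. cf (a, b, c, e) \<noteq> 0 \<longrightarrow> a + b + c + e \<le> d"
    and g: "\<forall>x0 x1 x2 x3. g x0 x1 x2 x3 = (\<Sum>a\<le>d. \<Sum>b\<le>d. \<Sum>c\<le>d. \<Sum>e\<le>d.
       cf (a, b, c, e) * x0 ^ a * x1 ^ b * x2 ^ c * x3 ^ e)"
    using assms(1) unfolding poly4_le_def by blast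
  have sum: "P (\<lambda>x0 x1 x2 x3. \<Sum>i\<in>S. F i x0 x1 x2 x3)"
    if "finite S" "\<And>i. i \<in> S \<Longrightarrow> P (F i)" for S and F :: "nat \<Rightarrow> real \<Rightarrow> real \<Rightarrow> real \<Rightarrow> real \<Rightarrow> real"
    using that by (induction S rule: finite_induct) (auto simp: zero intro: add)
  have "P (\<lambda>x0 x1 x2 x3. cf (a, b, c, e) * x0 ^ a * x1 ^ b * x2 ^ c * x3 ^ e)" for a b c e
    using cf zero monomial by (cases "cf (a, b, c, e) = 0") auto
  then have "P (\<lambda>x0 x1 x2 x3. \<Sum>a\<le>d. \<Sum>b\<le>d. \<Sum>c\<le>d. \<Sum>e\<le>d.
       cf (a, b, c, e) * x0 ^ a * x1 ^ b * x2 ^ c * x3 ^ e)"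
    by (intro sum finite_atMost)
  moreover have "g = (\<lambda>x0 x1 x2 x3. \<Sum>a\<le>d. \<Sum>b\<le>d. \<Sum>c\<le>d. \<Sum>e\<le>d.
       cf (a, b, c, e) * x0 ^ a * x1 ^ b * x2 ^ c * x3 ^ e)"
    using g by (intro ext) simp
  ultimately show ?thesis by simp
qed

lemma poly4_le_mult:
  assumes "poly4_le d f" "poly4_le e g"
  shows "poly4_le (d + e) (\<lambda>x0 x1 x2 x3. f x0 x1 x2 x3 * g x0 x1 x2 x3)"
  using assms(1)
proof (induction rule: poly4_le_induct)
  case zero
  show ?case by (simp add: poly4_le_zero)
next
  case (monomial k a b c e')
  from assms(2) show ?case
  proof (induction rule: poly4_le_induct)
    case zero
    show ?case by (simp add: poly4_le_zero)
  next
    case (monomial k' a' b' c' e'')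
    with \<open>a + b + c + e' \<le> d\<close> have "poly4_le (d + e) (\<lambda>x0 x1 x2 x3.
        (k * k') * x0 ^ (a + a') * x1 ^ (b + b') * x2 ^ (c + c') * x3 ^ (e' + e''))"
      by (intro poly4_le_monomial) simp
    then show ?case by (simp add: power_add ac_simps)
  next
    case (add g1 g2)
    then show ?case by (simp add: distrib_left poly4_le_add)
  qed
next
  case (add f1 f2)
  then show ?case by (simp add: distrib_right poly4_le_add)
qed

lemma polyfun_coords4:
  "polyfun (Suc 0) (\<lambda>x::real \<times> real \<times> real \<times> real. fst x)"
  "polyfun (Suc 0) (\<lambda>x::real \<times> real \<times> real \<times> real. fst (snd x))"
  "polyfun (Suc 0) (\<lambda>x::real \<times> real \<times> real \<times> real. fst (snd (snd x)))"
  "polyfun (Suc 0) (\<lambda>x::real \<times> real \<times> real \<times> real. snd (snd (snd x)))"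
  by (auto intro!: polyfun.linear simp: linear_iff)

lemma polyfun_monomial4:
  assumes "a + b + c + e \<le> d"
  shows "polyfun d (\<lambda>(x0, x1, x2, x3). k * x0 ^ a * x1 ^ b * x2 ^ c * x3 ^ e)"
proof -
  have "polyfun (0 + a * Suc 0 + b * Suc 0 + c * Suc 0 + e * Suc 0) (\<lambda>x.
      k * fst x ^ a * fst (snd x) ^ b * fst (snd (snd x)) ^ c * snd (snd (snd x)) ^ e)"
    by (intro polyfun.mult polyfun_power polyfun.const polyfun_coords4)
  then show ?thesis
    using polyfun_mono[OF _ assms] by (simp add: case_prod_unfold)
qed

lemma linear_expansion4:
  fixes l :: "real \<times> real \<times> real \<times> real \<Rightarrow> real"
  assumes "linear l"
  shows "l (x0, x1, x2, x3) =
    l (1, 0, 0, 0) * x0 + l (0, 1, 0, 0) * x1 + l (0, 0, 1, 0) * x2 + l (0, 0, 0, 1) * x3"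
proof -
  have "l (x0, x1, x2, x3) = l (x0 *\<^sub>R (1, 0, 0, 0) + x1 *\<^sub>R (0, 1, 0, 0) +
      x2 *\<^sub>R (0, 0, 1, 0) + x3 *\<^sub>R (0, 0, 0, 1))"
    by simp
  also have "\<dots> =
      l (1, 0, 0, 0) * x0 + l (0, 1, 0, 0) * x1 + l (0, 0, 1, 0) * x2 + l (0, 0, 0, 1) * x3"
    using assms by (simp only: linear_add linear_scale) (simp add: mult.commute)
  finally show ?thesis .
qed

lemma poly4_le_linear: "poly4_le (Suc d) (\<lambda>x0 x1 x2 x3. k0 * x0 + k1 * x1 + k2 * x2 + k3 * x3)"
  using poly4_le_monomial[of 1 0 0 0 "Suc d" k0] poly4_le_monomial[of 0 1 0 0 "Suc d" k1]
    poly4_le_monomial[of 0 0 1 0 "Suc d" k2] poly4_le_monomial[of 0 0 0 1 "Suc d" k3]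
  by (intro poly4_le_add) simp_all

lemma poly4_le_iff_polyfun: "poly4_le d g \<longleftrightarrow> polyfun d (\<lambda>(x0, x1, x2, x3). g x0 x1 x2 x3)"
proof
  assume "poly4_le d g"
  then show "polyfun d (\<lambda>(x0, x1, x2, x3). g x0 x1 x2 x3)"
  proof (induction rule: poly4_le_induct)
    case zero
    show ?case using polyfun.const[of d 0] by (simp add: case_prod_unfold)
  next
    case (monomial k a b c e)
    then show ?case by (rule polyfun_monomial4)
  next
    case (add f g)
    then show ?case using polyfun.add by (simp add: case_prod_unfold)
  qed
next
  have "poly4_le d (\<lambda>x0 x1 x2 x3. f (x0, x1, x2, x3))" if "polyfun d f" for f
    using that
  proof (induction rule: polyfun.induct)
    case (const d c)
    show ?case using poly4_le_monomial[of 0 0 0 0 d c] by simp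
  next
    case (linear l d)
    have "(\<lambda>x0 x1 x2 x3. l (x0, x1, x2, x3)) = (\<lambda>x0 x1 x2 x3.
        l (1, 0, 0, 0) * x0 + l (0, 1, 0, 0) * x1 + l (0, 0, 1, 0) * x2 + l (0, 0, 0, 1) * x3)"
      by (intro ext) (rule linear_expansion4[OF linear.hyps])
    then show ?case by (simp only: poly4_le_linear)
  next
    case (add d f g)
    from add.IH show ?case by (rule poly4_le_add)
  next
    case (mult d f e g)
    from mult.IH show ?case by (rule poly4_le_mult)
  qed
  from this[of "\<lambda>(x0, x1, x2, x3). g x0 x1 x2 x3"]
  show "polyfun d (\<lambda>(x0, x1, x2, x3). g x0 x1 x2 x3) \<Longrightarrow> poly4_le d g" by simp
qed

lemma tdeg4_eq_polyfun_degree: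
  "tdeg4 g = (if g = (\<lambda>_ _ _ _. 0) then -\<infinity>
     else ereal (real (polyfun_degree (\<lambda>(x0, x1, x2, x3). g x0 x1 x2 x3))))"
  unfolding tdeg4_def polyfun_degree_def poly4_le_iff_polyfun ..

section \<open>Quaternionic polynomials\<close>

definition quat_of :: "real \<times> real \<times> real \<times> real \<Rightarrow> quat" where
  "quat_of = (\<lambda>(a, b, c, d). Quat a b c d)"

lemma quat_of_sel [simp]:
  "Re_q (quat_of x) = fst x" "Im_i (quat_of x) = fst (snd x)"
  "Im_j (quat_of x) = fst (snd (snd x))" "Im_k (quat_of x) = snd (snd (snd x))"
  by (simp_all add: quat_of_def case_prod_unfold)

definition quat_polyfun :: "nat \<Rightarrow> (quat \<Rightarrow> quat) \<Rightarrow> bool" where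
  "quat_polyfun d p \<longleftrightarrow>
     polyfun d (\<lambda>x. Re_q (p (quat_of x))) \<and> polyfun d (\<lambda>x. Im_i (p (quat_of x))) \<and>
     polyfun d (\<lambda>x. Im_j (p (quat_of x))) \<and> polyfun d (\<lambda>x. Im_k (p (quat_of x)))"

lemma quat_polyfun_mono: "quat_polyfun d p \<Longrightarrow> d \<le> d' \<Longrightarrow> quat_polyfun d' p"
  unfolding quat_polyfun_def using polyfun_mono by blast

lemma H1X_quat_polyfun:
  assumes "p \<in> H1X"
  shows "\<exists>d. quat_polyfun d p"
  using assms
proof (induction rule: H1X.induct)
  case (const c)
  show ?case unfolding quat_polyfun_def by (blast intro: polyfun.const)
next
  case ident
  show ?case unfolding quat_polyfun_def by (auto intro: polyfun_coords4)
next
  case (add f g)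
  then obtain d where "quat_polyfun d f" "quat_polyfun d g"
    by (metis quat_polyfun_mono max.cobounded1 max.cobounded2)
  then show ?case unfolding quat_polyfun_def qadd_def by (auto intro: polyfun.add)
next
  case (neg f)
  then show ?case unfolding quat_polyfun_def qneg_def by (auto intro: polyfun_uminus)
next
  case (mul f g)
  then obtain d e where "quat_polyfun d f" "quat_polyfun e g" by blast
  then have "quat_polyfun (d + e) (\<lambda>x. qmul (f x) (g x))"
    unfolding quat_polyfun_def qmul_def by (simp add: polyfun.add polyfun.mult polyfun_diff)
  then show ?case ..
qed

definition qnorm2 :: "quat \<Rightarrow> real" where
  "qnorm2 y = (Re_q y)\<^sup>2 + (Im_i y)\<^sup>2 + (Im_j y)\<^sup>2 + (Im_k y)\<^sup>2"

lemma qnorm2_eq_0_iff: "qnorm2 y = 0 \<longleftrightarrow> y = qzero"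
  by (cases y) (auto simp: qnorm2_def qzero_def add_nonneg_eq_0_iff)

lemma qnorm2_qmul: "qnorm2 (qmul a b) = qnorm2 a * qnorm2 b"
  by (simp add: qnorm2_def qmul_def power2_eq_square algebra_simps)

definition qnorm2_fun :: "(quat \<Rightarrow> quat) \<Rightarrow> real \<times> real \<times> real \<times> real \<Rightarrow> real" where
  "qnorm2_fun p x = qnorm2 (p (quat_of x))"

lemma qnorm2_fun_eq_0_iff: "qnorm2_fun p = (\<lambda>_. 0) \<longleftrightarrow> p = (\<lambda>_. qzero)"
proof
  assume "qnorm2_fun p = (\<lambda>_. 0)"
  then have "p (quat_of (a, b, c, d)) = qzero" for a b c d
    by (metis qnorm2_fun_def qnorm2_eq_0_iff)
  then show "p = (\<lambda>_. qzero)"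
    by (intro ext) (metis quat.exhaust quat_of_def case_prod_conv)
qed (simp add: fun_eq_iff qnorm2_fun_def qnorm2_eq_0_iff)

lemma polyfun_qnorm2_fun: "quat_polyfun d p \<Longrightarrow> polyfun (d + d) (qnorm2_fun p)"
  unfolding quat_polyfun_def qnorm2_fun_def qnorm2_def power2_eq_square
  by (intro polyfun.add polyfun.mult) auto

lemma qdeg_eq_polyfun_degree:
  "qdeg p = (if p = (\<lambda>_. qzero) then -\<infinity>
     else ereal (real (polyfun_degree (qnorm2_fun p)) / 2))"
proof -
  have "(\<lambda>(x0, x1, x2, x3). let y = p (Quat x0 x1 x2 x3) in
      (Re_q y)\<^sup>2 + (Im_i y)\<^sup>2 + (Im_j y)\<^sup>2 + (Im_k y)\<^sup>2) = qnorm2_fun p"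
    by (auto simp: fun_eq_iff qnorm2_fun_def qnorm2_def quat_of_def Let_def)
  moreover have "(\<lambda>x0 x1 x2 x3. let y = p (Quat x0 x1 x2 x3) in
      (Re_q y)\<^sup>2 + (Im_i y)\<^sup>2 + (Im_j y)\<^sup>2 + (Im_k y)\<^sup>2) = (\<lambda>_ _ _ _. 0) \<longleftrightarrow>
      qnorm2_fun p = (\<lambda>_. 0)"
    by (auto simp: fun_eq_iff qnorm2_fun_def qnorm2_def quat_of_def Let_def)
  ultimately show ?thesis
    unfolding qdeg_def tdeg4_eq_polyfun_degree by (simp add: qnorm2_fun_eq_0_iff)
qed

lemma qdeg_nonzero_nat:
  assumes "p \<in> H1X" "p \<noteq> (\<lambda>_. qzero)"
  shows "\<exists>n. qdeg p = ereal (real n)"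
proof -
  obtain d where "polyfun d (qnorm2_fun p)"
    using H1X_quat_polyfun[OF assms(1)] polyfun_qnorm2_fun by blast
  moreover have "qnorm2_fun p x \<ge> 0" for x
    by (simp add: qnorm2_fun_def qnorm2_def)
  ultimately obtain n where "polyfun_degree (qnorm2_fun p) = 2 * n"
    using even_polyfun_degree_nonneg by blast
  with assms(2) show ?thesis by (simp add: qdeg_eq_polyfun_degree)
qed

lemma qdeg_qmul:
  assumes "p \<in> H1X" "q \<in> H1X"
  shows "qdeg (\<lambda>x. qmul (p x) (q x)) = qdeg p + qdeg q"
proof (cases "p = (\<lambda>_. qzero) \<or> q = (\<lambda>_. qzero)")
  case True
  then have "(\<lambda>x. qmul (p x) (q x)) = (\<lambda>_. qzero)" by (auto simp: qmul_def qzero_def)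
  moreover have "qdeg p \<noteq> \<infinity>" "qdeg q \<noteq> \<infinity>" by (simp_all add: qdeg_eq_polyfun_degree)
  ultimately show ?thesis using True by (auto simp: qdeg_eq_polyfun_degree)
next
  case False
  obtain d e where d: "polyfun d (qnorm2_fun p)" and e: "polyfun e (qnorm2_fun q)"
    using H1X_quat_polyfun assms polyfun_qnorm2_fun by metis
  have nz: "qnorm2_fun p \<noteq> (\<lambda>_. 0)" "qnorm2_fun q \<noteq> (\<lambda>_. 0)"
    using False by (simp_all add: qnorm2_fun_eq_0_iff)
  have prod: "qnorm2_fun (\<lambda>x. qmul (p x) (q x)) = (\<lambda>x. qnorm2_fun p x * qnorm2_fun q x)"
    by (simp add: fun_eq_iff qnorm2_fun_def qnorm2_qmul)
  then have "(\<lambda>x. qmul (p x) (q x)) \<noteq> (\<lambda>_. qzero)"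
    using polyfun_mult_nonzero[OF d e nz] by (simp flip: qnorm2_fun_eq_0_iff)
  with False show ?thesis
    by (simp add: qdeg_eq_polyfun_degree prod polyfun_degree_mult[OF d e nz] add_divide_distrib)
qed

theorem lemma3:
  shows "(\<forall>p \<in> H1X. (p = (\<lambda>_. qzero) \<longrightarrow> qdeg p = -\<infinity>) \<and>
                     (p \<noteq> (\<lambda>_. qzero) \<longrightarrow> (\<exists>n::int. qdeg p = ereal (real_of_int n))))
       \<and> (\<forall>p \<in> H1X. \<forall>q \<in> H1X. qdeg (\<lambda>x. qmul (p x) (q x)) = qdeg p + qdeg q)"
proof (intro conjI ballI impI)
  fix p :: "quat \<Rightarrow> quat"
  assume "p = (\<lambda>_. qzero)"
  then show "qdeg p = -\<infinity>" by (simp add: qdeg_eq_polyfun_degree)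
next
  fix p :: "quat \<Rightarrow> quat"
  assume "p \<in> H1X" "p \<noteq> (\<lambda>_. qzero)"
  then obtain n where "qdeg p = ereal (real n)" using qdeg_nonzero_nat by blast
  then show "\<exists>n::int. qdeg p = ereal (real_of_int n)" by (intro exI[of _ "int n"]) simp
next
  fix p q :: "quat \<Rightarrow> quat"
  assume "p \<in> H1X" "q \<in> H1X"
  then show "qdeg (\<lambda>x. qmul (p x) (q x)) = qdeg p + qdeg q" by (rule qdeg_qmul)
qed

end
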